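(* Let $d\ge 2$. Let $\rho_T$ be a density matrix on $\mathbb{C}^2$ with eigenvalues, sorted in decreasing order, $\{\alpha, 1-\alpha\}$, and let $\rho_A$ be a density matrix on $\mathbb{C}^d$ with eigenvalues, sorted in decreasing order, $\beta_1 \ge \beta_2 \ge \dots \ge \beta_d$. Let $U$ be any unitary on $\mathbb{C}^2\otimes\mathbb{C}^d$, and let $\rho_T^{out} = \mathrm{Tr}_A\!\left(U(\rho_T\otimes\rho_A)U^\dagger\right)$ have eigenvalues, sorted in decreasing order, $\{\alpha^{out}, 1-\alpha^{out}\}$. Then $$\alpha^{out} \le \max\left(\alpha, \frac{\beta_1}{\beta_1+\beta_d}\right).$$
   Context: $\mathrm{Tr}_A$ denotes the partial trace over the auxiliary factor $\mathbb{C}^d$; the factor $\mathbb{C}^2$ is the target qubit. *)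

theory Defs
  imports "Jordan_Normal_Form.Matrix" "Jordan_Normal_Form.Char_Poly"
begin

definition adj :: "complex mat \<Rightarrow> complex mat" where
  "adj A = mat (dim_col A) (dim_row A) (\<lambda>(i,j). cnj (A $$ (j,i)))"

definition unitary_mat :: "nat \<Rightarrow> complex mat \<Rightarrow> bool" where
  "unitary_mat n U \<longleftrightarrow> U \<in> carrier_mat n n \<and> U * adj U = 1\<^sub>m n \<and> adj U * U = 1\<^sub>m n"

definition density_mat :: "nat \<Rightarrow> complex mat \<Rightarrow> bool" where
  "density_mat n A \<longleftrightarrow> A \<in> carrier_mat n n \<and> adj A = A \<and>
     (\<forall>v \<in> carrier_vec n. 0 \<le> Re (conjugate v \<bullet> (A *\<^sub>v v))) \<and> (\<Sum>i<n. A $$ (i,i)) = 1"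

definition sorted_eigenvalues :: "nat \<Rightarrow> complex mat \<Rightarrow> (nat \<Rightarrow> real) \<Rightarrow> bool" where
  "sorted_eigenvalues n A lam \<longleftrightarrow>
     char_poly A = (\<Prod>i<n. [:- complex_of_real (lam i), 1:]) \<and>
     (\<forall>i j. i \<le> j \<longrightarrow> j < n \<longrightarrow> lam j \<le> lam i)"

text \<open>Kronecker product on C^m \<otimes> C^n, basis index (i,j) \<mapsto> i*n + j.\<close>
definition kron :: "nat \<Rightarrow> nat \<Rightarrow> complex mat \<Rightarrow> complex mat \<Rightarrow> complex mat" where
  "kron m n A B = mat (m*n) (m*n) (\<lambda>(r,c). A $$ (r div n, c div n) * B $$ (r mod n, c mod n))"

definition ptrace2 :: "nat \<Rightarrow> nat \<Rightarrow> complex mat \<Rightarrow> complex mat" where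
  "ptrace2 m n M = mat m m (\<lambda>(i,k). \<Sum>j<n. M $$ (i*n + j, k*n + j))"

end

theory Submission
  imports Defs "Jordan_Normal_Form.Schur_Decomposition"
begin

(* Diagonalise rhoT = V diag(alpha, 1 - alpha) (adj V) and rhoA = W diag(beta) (adj W).  Then
   U (rhoT (x) rhoA) (adj U) = X D (adj X) with X = U (V (x) W) unitary and D diagonal with entries
   p_a beta_b, where p = (alpha, 1 - alpha).  For a unit eigenvector v of the output state with
   eigenvalue alpha_out,
     alpha_out = <v, Tr_A (X D (adj X)) v> = sum_l D_l q_l,
   where q_l is the squared norm of the component of the l-th column of X along v (x) C^d.
   Unitarity of X gives 0 <= q_l <= 1 and sum_l q_l = d, so alpha_out is bounded by a linear program.
   Take c = max alpha (beta_1 / (beta_1 + beta_d)) and the Lagrange multiplier c beta_d for the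
   constraint sum_l q_l = d: then the pair (q_j, q_(d+j)) contributes at most c beta_j, which only has
   to be checked at the four corners of the unit square, where it reduces to alpha >= 1/2 and
   beta_j / (beta_j + beta_d) <= beta_1 / (beta_1 + beta_d). *)

lemma sum_lessThan_mult:
  fixes g :: "nat \<Rightarrow> 'a :: comm_monoid_add"
  shows "(\<Sum>l < m * n. g l) = (\<Sum>a < m. \<Sum>b < n. g (a * n + b))"
proof -
  have "sum g {a * n..<a * n + n} = (\<Sum>b < n. g (a * n + b))" for a
    using sum.shift_bounds_nat_ivl[of g 0 "a * n" n] by (simp add: lessThan_atLeast0 add.commute)
  then show ?thesis
    by (simp add: sum.nat_group[symmetric])
qed

lemma sum_lessThan_two_mult:
  fixes g :: "nat \<Rightarrow> 'a :: comm_monoid_add"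
  shows "(\<Sum>l < 2 * n. g l) = (\<Sum>j < n. g j + g (n + j))"
  by (subst sum_lessThan_mult) (simp add: numeral_2_eq_2 sum.distrib)

lemma sum_rotate3: "(\<Sum>a\<in>A. \<Sum>b\<in>B. \<Sum>c\<in>C. f a b c) = (\<Sum>c\<in>C. \<Sum>a\<in>A. \<Sum>b\<in>B. f a b c)"
proof -
  have "(\<Sum>a\<in>A. \<Sum>b\<in>B. \<Sum>c\<in>C. f a b c) = (\<Sum>a\<in>A. \<Sum>c\<in>C. \<Sum>b\<in>B. f a b c)"
    by (rule sum.cong[OF refl]) (rule sum.swap)
  also have "\<dots> = (\<Sum>c\<in>C. \<Sum>a\<in>A. \<Sum>b\<in>B. f a b c)"
    by (rule sum.swap)
  finally show ?thesis .
qed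

lemma div_less_of_less_mult: "r < m * n \<Longrightarrow> r div n < (m :: nat)"
  by (simp add: less_mult_imp_div_less)

lemma mod_less_of_less_mult: "r < m * n \<Longrightarrow> r mod n < (n :: nat)"
  by (metis mod_less_divisor mult_0_right not_less_zero gr0I)

lemma mult_add_less_mult: "a < m \<Longrightarrow> b < n \<Longrightarrow> a * n + b < m * (n :: nat)"
proof -
  assume "a < m" "b < n"
  then have "a * n + b < (a + 1) * n"
    by simp
  also have "\<dots> \<le> m * n"
    using \<open>a < m\<close> by (intro mult_right_mono) auto
  finally show ?thesis .
qed

lemma cmod_sum_squared:
  "complex_of_real ((cmod (\<Sum>i\<in>I. a i))\<^sup>2) = (\<Sum>i\<in>I. \<Sum>k\<in>I. a i * cnj (a k))"
  by (simp only: complex_norm_square cnj_sum sum_product)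

lemma cmod_mult_add_mult_squared_le:
  "(cmod (a * x + b * y))\<^sup>2 \<le> ((cmod a)\<^sup>2 + (cmod b)\<^sup>2) * ((cmod x)\<^sup>2 + (cmod y)\<^sup>2)"
proof -
  have "cmod (a * x + b * y) \<le> cmod a * cmod x + cmod b * cmod y"
    by (metis norm_mult norm_triangle_ineq)
  then have "(cmod (a * x + b * y))\<^sup>2 \<le> (cmod a * cmod x + cmod b * cmod y)\<^sup>2"
    by (simp add: power_mono)
  also have "\<dots> \<le> ((cmod a)\<^sup>2 + (cmod b)\<^sup>2) * ((cmod x)\<^sup>2 + (cmod y)\<^sup>2)"
    using zero_le_power2[of "cmod a * cmod y - cmod b * cmod x"]
    by (simp add: power2_eq_square algebra_simps)
  finally show ?thesis .
qed

section \<open>Adjoints and unitary matrices\<close>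

lemma adj_carrier_mat [simp]: "A \<in> carrier_mat n m \<Longrightarrow> adj A \<in> carrier_mat m n"
  and adj_dim [simp]: "dim_row (adj A) = dim_col A" "dim_col (adj A) = dim_row A"
  by (auto simp: adj_def)

lemma adj_index [simp]:
  "i < dim_col A \<Longrightarrow> j < dim_row A \<Longrightarrow> adj A $$ (i, j) = cnj (A $$ (j, i))"
  by (simp add: adj_def)

lemma adj_adj [simp]: "adj (adj A) = A"
  by (rule eq_matI) auto

lemma adj_zero_mat [simp]: "adj (0\<^sub>m n m) = 0\<^sub>m m n"
  by (rule eq_matI) auto

lemma adj_one_mat [simp]: "adj (1\<^sub>m n) = 1\<^sub>m n"
  by (rule eq_matI) auto

lemma row_adj: "i < dim_col A \<Longrightarrow> row (adj A) i = conjugate (col A i)"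
  by (rule eq_vecI) auto

lemma adj_mult_mat_index:
  assumes "i < dim_col A" "j < dim_col B" "dim_row A = dim_row B"
  shows "(adj A * B) $$ (i, j) = col B j \<bullet>c col A i"
proof -
  have "(adj A * B) $$ (i, j) = conjugate (col A i) \<bullet> col B j"
    using assms by (simp only: index_mult_mat(1) adj_dim row_adj)
  also have "\<dots> = col B j \<bullet>c col A i"
    using assms(3) by (simp add: scalar_prod_def mult.commute)
  finally show ?thesis .
qed

lemma adj_mult_mat: "dim_col A = dim_row B \<Longrightarrow> adj (A * B) = adj B * adj A"
  by (rule eq_matI) (auto simp: scalar_prod_def sum_conjugate mult.commute intro!: sum.cong)

lemma mult_mat_assoc: "dim_col A = dim_row B \<Longrightarrow> dim_col B = dim_row C \<Longrightarrow> A * B * C = A * (B * C)"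
  by (rule assoc_mult_mat[of A "dim_row A" "dim_col A" B "dim_col B" C "dim_col C"]) auto

lemma adj_conj_mat:
  assumes "dim_row A = dim_row W" "dim_col A = dim_row W"
  shows "adj (adj W * A * W) = adj W * adj A * W"
  using assms by (simp add: adj_mult_mat mult_mat_assoc)

lemma mult_conj_mat:
  assumes "dim_col U = dim_row W" "dim_col W = dim_row D" "dim_col D = dim_col W"
  shows "U * (W * D * adj W) * adj U = (U * W) * D * adj (U * W)"
  using assms by (simp add: adj_mult_mat mult_mat_assoc)

lemma unitary_mat_carrier: "unitary_mat n U \<Longrightarrow> U \<in> carrier_mat n n"
  by (simp add: unitary_mat_def)

lemma unitary_mat_dim: "unitary_mat n U \<Longrightarrow> dim_row U = n" "unitary_mat n U \<Longrightarrow> dim_col U = n"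
  unfolding unitary_mat_def carrier_mat_def by auto

lemma unitary_matI:
  assumes "U \<in> carrier_mat n n" "adj U * U = 1\<^sub>m n"
  shows "unitary_mat n U"
  using assms mat_mult_left_right_inverse[of "adj U" n U] by (simp add: unitary_mat_def)

lemma unitary_mat_adj: "unitary_mat n U \<Longrightarrow> unitary_mat n (adj U)"
  by (auto simp: unitary_mat_def)

lemma unitary_mat_cancel:
  assumes U: "unitary_mat n U" and X: "dim_row X = n"
  shows "adj U * (U * X) = X" "U * (adj U * X) = X"
proof -
  have "adj U * (U * X) = (adj U * U) * X" "U * (adj U * X) = (U * adj U) * X"
    using X unitary_mat_dim[OF U] by (simp_all add: mult_mat_assoc)
  then show "adj U * (U * X) = X" "U * (adj U * X) = X"
    using U X by (simp_all add: unitary_mat_def)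
qed

lemma unitary_mat_mult:
  assumes U: "unitary_mat n U" and V: "unitary_mat n V"
  shows "unitary_mat n (U * V)"
proof (rule unitary_matI)
  show "U * V \<in> carrier_mat n n"
    using mult_carrier_mat[OF unitary_mat_carrier[OF U] unitary_mat_carrier[OF V]] .
  have dims: "dim_row U = n" "dim_col U = n" "dim_row V = n" "dim_col V = n"
    using unitary_mat_dim[OF U] unitary_mat_dim[OF V] by simp_all
  have "adj (U * V) * (U * V) = adj V * (adj U * (U * V))"
    using dims by (simp add: adj_mult_mat mult_mat_assoc)
  also have "\<dots> = adj V * V"
    using dims by (simp add: unitary_mat_cancel[OF U])
  also have "\<dots> = 1\<^sub>m n"
    using V by (simp add: unitary_mat_def)
  finally show "adj (U * V) * (U * V) = 1\<^sub>m n" .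
qed

lemma unitary_mat_conj_cancel:
  assumes V: "unitary_mat n V" and D: "D \<in> carrier_mat n n"
  shows "adj V * (V * D * adj V) * V = D"
proof -
  have dims: "dim_row V = n" "dim_col V = n" "dim_row D = n" "dim_col D = n"
    using unitary_mat_dim[OF V] D by auto
  then have "adj V * (V * D * adj V) * V = D * (adj V * V)"
    by (simp add: mult_mat_assoc unitary_mat_cancel[OF V])
  then show ?thesis
    using V dims by (simp add: unitary_mat_def)
qed

lemma unitary_mat_col_orthonormal:
  assumes "unitary_mat n U" "p < n" "q < n"
  shows "(\<Sum>k<n. cnj (U $$ (k, p)) * U $$ (k, q)) = (if p = q then 1 else 0)"
proof -
  have "(adj U * U) $$ (p, q) = (if p = q then 1 else 0)"
    using assms by (simp add: unitary_mat_def)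
  moreover have "U \<in> carrier_mat n n"
    using assms(1) by (rule unitary_mat_carrier)
  ultimately show ?thesis
    using assms(2,3) by (simp add: scalar_prod_def lessThan_atLeast0)
qed

lemma unitary_mat_row_orthonormal:
  assumes "unitary_mat n U" "p < n" "q < n"
  shows "(\<Sum>k<n. U $$ (p, k) * cnj (U $$ (q, k))) = (if p = q then 1 else 0)"
proof -
  have "(U * adj U) $$ (p, q) = (if p = q then 1 else 0)"
    using assms by (simp add: unitary_mat_def)
  moreover have "U \<in> carrier_mat n n"
    using assms(1) by (rule unitary_mat_carrier)
  ultimately show ?thesis
    using assms(2,3) by (simp add: scalar_prod_def lessThan_atLeast0)
qed

lemma adj_four_block_mat:
  assumes "A \<in> carrier_mat nr1 nc1" "B \<in> carrier_mat nr1 nc2"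
    "C \<in> carrier_mat nr2 nc1" "D \<in> carrier_mat nr2 nc2"
  shows "adj (four_block_mat A B C D) = four_block_mat (adj A) (adj C) (adj B) (adj D)"
proof (rule eq_matI)
  fix i j
  assume "i < dim_row (four_block_mat (adj A) (adj C) (adj B) (adj D))"
    "j < dim_col (four_block_mat (adj A) (adj C) (adj B) (adj D))"
  then have "i < nc1 + nc2" "j < nr1 + nr2"
    using assms by auto
  then show "adj (four_block_mat A B C D) $$ (i, j) = four_block_mat (adj A) (adj C) (adj B) (adj D) $$ (i, j)"
    using assms by (simp add: carrier_matD)
qed (use assms in auto)

lemma mult_four_block_diag_mat:
  assumes "A \<in> carrier_mat k k" "B \<in> carrier_mat m m" "C \<in> carrier_mat k k" "D \<in> carrier_mat m m"
  shows "four_block_mat A (0\<^sub>m k m) (0\<^sub>m m k) B * four_block_mat C (0\<^sub>m k m) (0\<^sub>m m k) D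
    = four_block_mat (A * C) (0\<^sub>m k m) (0\<^sub>m m k) (B * D)"
  using mult_four_block_mat[OF assms(1) zero_carrier_mat zero_carrier_mat assms(2)
      assms(3) zero_carrier_mat zero_carrier_mat assms(4)] assms
  by simp

lemma unitary_mat_four_block_diag:
  assumes U: "unitary_mat k U" and V: "unitary_mat m V"
  shows "unitary_mat (k + m) (four_block_mat U (0\<^sub>m k m) (0\<^sub>m m k) V)"
proof (rule unitary_matI)
  have Uc [simp]: "U \<in> carrier_mat k k" and Vc [simp]: "V \<in> carrier_mat m m"
    using U V by (auto simp: unitary_mat_carrier)
  then show "four_block_mat U (0\<^sub>m k m) (0\<^sub>m m k) V \<in> carrier_mat (k + m) (k + m)"
    by simp
  have "adj (four_block_mat U (0\<^sub>m k m) (0\<^sub>m m k) V) * four_block_mat U (0\<^sub>m k m) (0\<^sub>m m k) V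
      = four_block_mat (adj U * U) (0\<^sub>m k m) (0\<^sub>m m k) (adj V * V)"
    using adj_four_block_mat[OF Uc zero_carrier_mat zero_carrier_mat Vc]
    by (simp add: mult_four_block_diag_mat)
  also have "\<dots> = 1\<^sub>m (k + m)"
    using U V by (simp add: unitary_mat_def)
  finally show "adj (four_block_mat U (0\<^sub>m k m) (0\<^sub>m m k) V) * four_block_mat U (0\<^sub>m k m) (0\<^sub>m m k) V
      = 1\<^sub>m (k + m)" .
qed

lemma four_block_diag_conj:
  assumes E: "E \<in> carrier_mat k k" and V: "V \<in> carrier_mat m m" and D: "D \<in> carrier_mat m m"
  shows "four_block_mat E (0\<^sub>m k m) (0\<^sub>m m k) (V * D * adj V)
    = four_block_mat (1\<^sub>m k) (0\<^sub>m k m) (0\<^sub>m m k) V * four_block_mat E (0\<^sub>m k m) (0\<^sub>m m k) D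
      * adj (four_block_mat (1\<^sub>m k) (0\<^sub>m k m) (0\<^sub>m m k) V)"
proof -
  have "adj (four_block_mat (1\<^sub>m k) (0\<^sub>m k m) (0\<^sub>m m k) V) = four_block_mat (1\<^sub>m k) (0\<^sub>m k m) (0\<^sub>m m k) (adj V)"
    using adj_four_block_mat[OF one_carrier_mat zero_carrier_mat zero_carrier_mat V] by simp
  then show ?thesis
    using E V D mult_carrier_mat[OF V D] carrier_matD[OF E] by (simp add: mult_four_block_diag_mat)
qed

section \<open>Unitary diagonalization of Hermitian matrices\<close>

definition normalize_vec :: "complex vec \<Rightarrow> complex vec" where
  "normalize_vec v = complex_of_real (1 / sqrt (Re (v \<bullet>c v))) \<cdot>\<^sub>v v"

lemma normalize_vec_carrier [simp]: "v \<in> carrier_vec n \<Longrightarrow> normalize_vec v \<in> carrier_vec n"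
  by (simp add: normalize_vec_def)

lemma cscalar_prod_smult:
  assumes "v \<in> carrier_vec n" "w \<in> carrier_vec n"
  shows "(a \<cdot>\<^sub>v v) \<bullet>c (b \<cdot>\<^sub>v w) = a * cnj b * (v \<bullet>c w)"
  using assms by (simp add: conjugate_smult_vec)

lemma normalize_vec_orthogonal:
  assumes "v \<in> carrier_vec n" "w \<in> carrier_vec n" "v \<bullet>c w = 0"
  shows "normalize_vec v \<bullet>c normalize_vec w = 0"
  unfolding normalize_vec_def cscalar_prod_smult[OF assms(1,2)] using assms(3) by simp

lemma normalize_vec_unit:
  assumes v: "v \<in> carrier_vec n" and "v \<noteq> 0\<^sub>v n"
  shows "normalize_vec v \<bullet>c normalize_vec v = 1"
proof -
  have "v \<bullet>c v > 0"
    using assms by simp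
  then obtain r where r: "v \<bullet>c v = complex_of_real r" "r > 0"
    by (intro that[of "Re (v \<bullet>c v)"]) (auto simp: less_complex_def complex_eq_iff)
  have "1 / sqrt r * (1 / sqrt r) * r = 1"
    using r(2) by (simp add: field_simps)
  then show ?thesis
    unfolding normalize_vec_def cscalar_prod_smult[OF v v] r(1) complex_cnj_complex_of_real
    by (simp only: Re_complex_of_real of_real_mult[symmetric] of_real_1)
qed

lemma normalize_vec_id: "v \<bullet>c v = 1 \<Longrightarrow> normalize_vec v = v"
  by (simp add: normalize_vec_def)

lemma unit_eigenvector_exists:
  fixes A :: "complex mat"
  assumes A: "A \<in> carrier_mat n n" and "eigenvalue A e"
  shows "\<exists>v \<in> carrier_vec n. v \<bullet>c v = 1 \<and> A *\<^sub>v v = e \<cdot>\<^sub>v v"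
proof -
  from assms obtain w where w: "w \<in> carrier_vec n" "w \<noteq> 0\<^sub>v n" "A *\<^sub>v w = e \<cdot>\<^sub>v w"
    by (auto simp: eigenvalue_def eigenvector_def)
  have "A *\<^sub>v normalize_vec w = e \<cdot>\<^sub>v normalize_vec w"
    using A w by (simp add: normalize_vec_def mult_mat_vec smult_smult_assoc mult.commute)
  then show ?thesis
    using w normalize_vec_unit[OF w(1,2)] normalize_vec_carrier[OF w(1)] by blast
qed

lemma unitary_mat_of_corthogonal_cols:
  assumes ws: "set ws \<subseteq> carrier_vec n" "corthogonal ws" "length ws = n"
  shows "unitary_mat n (mat_of_cols n (map normalize_vec ws))"
proof (rule unitary_matI)
  define W where "W = mat_of_cols n (map normalize_vec ws)"
  have wsc: "ws ! i \<in> carrier_vec n" if "i < n" for i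
    using ws that by auto
  have ws_orth: "ws ! j \<bullet>c ws ! i = 0 \<longleftrightarrow> i \<noteq> j" if "i < n" "j < n" for i j
    using corthogonalD[OF ws(2), of j i] ws(3) that by auto
  show W: "W \<in> carrier_mat n n"
    using ws by (auto simp: W_def)
  have col_W: "col W i = normalize_vec (ws ! i)" if "i < n" for i
    using that ws(3) wsc[OF that] by (simp add: W_def)
  show "adj W * W = 1\<^sub>m n"
  proof (rule eq_matI)
    fix i j assume "i < dim_row (1\<^sub>m n)" "j < dim_col (1\<^sub>m n)"
    then have ij: "i < n" "j < n" by auto
    have "(adj W * W) $$ (i, j) = normalize_vec (ws ! j) \<bullet>c normalize_vec (ws ! i)"
      using ij W by (simp only: adj_mult_mat_index col_W carrier_matD)
    also have "\<dots> = 1\<^sub>m n $$ (i, j)"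
    proof (cases "i = j")
      case True
      have "ws ! i \<noteq> 0\<^sub>v n"
        using ws_orth[OF ij(1) ij(1)] wsc[OF ij(1)] by auto
      then show ?thesis
        using True ij normalize_vec_unit[OF wsc[OF ij(1)]] by simp
    next
      case False
      then show ?thesis
        using ij ws_orth[OF ij] by (simp add: normalize_vec_orthogonal[OF wsc wsc])
    qed
    finally show "(adj W * W) $$ (i, j) = 1\<^sub>m n $$ (i, j)" .
  qed (use W in auto)
qed

lemma unitary_mat_with_first_col:
  assumes v: "v \<in> carrier_vec n" and v1: "v \<bullet>c v = 1"
  shows "\<exists>W. unitary_mat n W \<and> col W 0 = v"
proof -
  have v0: "v \<noteq> 0\<^sub>v n"
    using v v1 by auto
  then have n: "0 < n"
    using v by (metis carrier_vecD eq_vecI less_nat_zero_code index_zero_vec(2) gr0I)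
  interpret cof_vec_space n "TYPE(complex)" .
  define ws where "ws = gram_schmidt n (basis_completion v)"
  note bc = basis_completion[OF v v0]
  have ws: "set ws \<subseteq> carrier_vec n" "corthogonal ws" "length ws = n"
    using gram_schmidt_result[OF bc(2,4,5) ws_def] bc(6) by auto
  have "hd ws = v"
    using bc(6,7) n v unfolding ws_def by (cases "basis_completion v") auto
  then have "ws ! 0 = v"
    using ws(3) n by (cases ws) auto
  then have "col (mat_of_cols n (map normalize_vec ws)) 0 = v"
    using n ws v v1 by (simp add: normalize_vec_id)
  then show ?thesis
    using unitary_mat_of_corthogonal_cols[OF ws] by blast
qed

lemma unitary_conj_eigencol_index:
  assumes A: "A \<in> carrier_mat n n" and W: "unitary_mat n W" and p: "p < n"
    and Av: "A *\<^sub>v col W p = e \<cdot>\<^sub>v col W p" and i: "i < n"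
  shows "(adj W * A * W) $$ (i, p) = (if i = p then e else 0)"
proof -
  have Wc: "W \<in> carrier_mat n n"
    using W by (rule unitary_mat_carrier)
  have "(adj W * A * W) $$ (i, p) = (adj W * (A * W)) $$ (i, p)"
    using A Wc by (simp add: mult_mat_assoc)
  also have "\<dots> = col (A * W) p \<bullet>c col W i"
    using i p A Wc by (intro adj_mult_mat_index) auto
  also have "col (A * W) p = e \<cdot>\<^sub>v col W p"
    using col_mult2[OF A Wc p] Av by simp
  also have "(e \<cdot>\<^sub>v col W p) \<bullet>c col W i = e * (col W p \<bullet>c col W i)"
    using i p Wc by (simp add: smult_scalar_prod_distrib[of _ n])
  also have "col W p \<bullet>c col W i = (adj W * W) $$ (i, p)"
    using i p Wc by (intro adj_mult_mat_index[symmetric]) auto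
  finally show ?thesis
    using i p W by (simp add: unitary_mat_def)
qed

lemma hermitian_deflation:
  fixes A W :: "complex mat"
  assumes A: "A \<in> carrier_mat (Suc m) (Suc m)" and hA: "adj A = A"
    and W: "unitary_mat (Suc m) W" and Av: "A *\<^sub>v col W 0 = e \<cdot>\<^sub>v col W 0"
  shows "\<exists>B \<in> carrier_mat m m. adj B = B \<and>
    adj W * A * W = four_block_mat (mat 1 1 (\<lambda>_. e)) (0\<^sub>m 1 m) (0\<^sub>m m 1) B"
proof -
  define A' where "A' = adj W * A * W"
  have Wc: "W \<in> carrier_mat (Suc m) (Suc m)"
    using W by (rule unitary_mat_carrier)
  have A': "A' \<in> carrier_mat (Suc m) (Suc m)"
    unfolding A'_def using A Wc by (intro mult_carrier_mat[of _ _ "Suc m"] adj_carrier_mat)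
  have hA': "adj A' = A'"
    using A Wc hA by (simp add: A'_def adj_conj_mat)
  have col0: "A' $$ (i, 0) = (if i = 0 then e else 0)" if "i < Suc m" for i
    unfolding A'_def using unitary_conj_eigencol_index[OF A W _ Av that] by simp
  have "cnj e = e"
    using arg_cong[OF hA', of "\<lambda>M. M $$ (0, 0)"] A' col0[of 0] by simp
  then have row0: "A' $$ (0, j) = (if j = 0 then e else 0)" if "j < Suc m" for j
    using arg_cong[OF hA', of "\<lambda>M. M $$ (0, j)"] A' col0[OF that] that by auto
  define B where "B = mat m m (\<lambda>(i, j). A' $$ (Suc i, Suc j))"
  have "adj B = B"
  proof (rule eq_matI)
    fix i j assume "i < dim_row B" "j < dim_col B"
    then show "adj B $$ (i, j) = B $$ (i, j)"
      using arg_cong[OF hA', of "\<lambda>M. M $$ (Suc i, Suc j)"] A' by (simp add: B_def)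
  qed (auto simp: B_def)
  moreover have "A' = four_block_mat (mat 1 1 (\<lambda>_. e)) (0\<^sub>m 1 m) (0\<^sub>m m 1) B"
  proof (rule eq_matI)
    fix i j assume "i < dim_row (four_block_mat (mat 1 1 (\<lambda>_. e)) (0\<^sub>m 1 m) (0\<^sub>m m 1) B)"
      "j < dim_col (four_block_mat (mat 1 1 (\<lambda>_. e)) (0\<^sub>m 1 m) (0\<^sub>m m 1) B)"
    then have "i < Suc m" "j < Suc m"
      by (auto simp: B_def)
    then show "A' $$ (i, j) = four_block_mat (mat 1 1 (\<lambda>_. e)) (0\<^sub>m 1 m) (0\<^sub>m m 1) B $$ (i, j)"
      using col0 row0 by (cases i; cases j) (auto simp: B_def)
  qed (use A' in \<open>auto simp: B_def\<close>)
  moreover have "B \<in> carrier_mat m m"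
    by (simp add: B_def)
  ultimately show ?thesis
    unfolding A'_def by blast
qed

lemma char_poly_unitary_conj:
  assumes "unitary_mat n W" "A \<in> carrier_mat n n"
  shows "char_poly (adj W * A * W) = char_poly A"
proof (rule char_poly_similar)
  have "similar_mat_wit (adj W * A * W) A (adj W) W"
    using assms by (intro similar_mat_witI[of _ _ n]) (auto simp: unitary_mat_def)
  then show "similar_mat (adj W * A * W) A"
    unfolding similar_mat_def by blast
qed

lemma char_poly_four_block_scalar:
  assumes "B \<in> carrier_mat m m"
  shows "char_poly (four_block_mat (mat 1 1 (\<lambda>_. e)) (0\<^sub>m 1 m) (0\<^sub>m m 1) B) = [:- e, 1:] * char_poly B"
proof -
  have "char_poly (mat 1 1 (\<lambda>_. e)) = [:- e, 1:]"
    by (simp add: char_poly_defs det_def sign_def)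
  then show ?thesis
    using char_poly_four_block_zeros_col[of "mat 1 1 (\<lambda>_. e)" "0\<^sub>m 1 m" m B] assms by simp
qed

lemma dim_mat_diag [simp]: "dim_row (mat_diag n f) = n" "dim_col (mat_diag n f) = n"
  by (simp_all add: mat_diag_def)

lemma mat_diag_Cons:
  "mat_diag (Suc m) (\<lambda>i. (e # es) ! i) =
    four_block_mat (mat 1 1 (\<lambda>_. e)) (0\<^sub>m 1 m) (0\<^sub>m m 1) (mat_diag m (\<lambda>i. es ! i))"
  by (rule eq_matI) (auto simp: mat_diag_def nth_Cons')

theorem hermitian_unitary_diagonalization:
  fixes A :: "complex mat"
  assumes "A \<in> carrier_mat n n" "adj A = A" "char_poly A = (\<Prod>e \<leftarrow> es. [:- e, 1:])"
  shows "\<exists>V. unitary_mat n V \<and> A = V * mat_diag n (\<lambda>i. es ! i) * adj V"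
  using assms
proof (induction es arbitrary: n A)
  case Nil
  then have "n = 0"
    using degree_monic_char_poly[of A n] by simp
  then show ?case
    using Nil by (intro exI[of _ "1\<^sub>m 0"]) (auto simp: unitary_mat_def intro!: eq_matI)
next
  case (Cons e es n A)
  then have A: "A \<in> carrier_mat n n" and cp: "char_poly A = [:- e, 1:] * (\<Prod>e \<leftarrow> es. [:- e, 1:])"
    by auto
  have "degree (char_poly A) = Suc (length es)"
    unfolding cp by (subst degree_mult_eq) (auto simp: degree_linear_factors)
  then obtain m where n: "n = Suc m"
    using degree_monic_char_poly[OF A] by (cases n) auto
  have "eigenvalue A e"
    unfolding eigenvalue_root_char_poly[OF A] cp by simp
  then obtain v where v: "v \<in> carrier_vec n" "v \<bullet>c v = 1" and Av: "A *\<^sub>v v = e \<cdot>\<^sub>v v"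
    using unit_eigenvector_exists[OF A] by blast
  obtain W where W: "unitary_mat n W" and Wv: "col W 0 = v"
    using unitary_mat_with_first_col[OF v] by blast
  obtain B where B: "B \<in> carrier_mat m m" "adj B = B"
    and AW: "adj W * A * W = four_block_mat (mat 1 1 (\<lambda>_. e)) (0\<^sub>m 1 m) (0\<^sub>m m 1) B"
    using hermitian_deflation[of A m W e] A Cons.prems(2) W Av Wv n by auto
  have "[:- e, 1:] * char_poly B = [:- e, 1:] * (\<Prod>e \<leftarrow> es. [:- e, 1:])"
    using char_poly_unitary_conj[OF W A] char_poly_four_block_scalar[OF B(1)] by (simp add: AW cp)
  then have "char_poly B = (\<Prod>e \<leftarrow> es. [:- e, 1:])"
    by (rule mult_left_cancel[THEN iffD1, rotated]) simp
  then obtain V where V: "unitary_mat m V" and BV: "B = V * mat_diag m (\<lambda>i. es ! i) * adj V"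
    using Cons.IH B by blast
  define P where "P = four_block_mat (1\<^sub>m 1) (0\<^sub>m 1 m) (0\<^sub>m m 1) V"
  have P: "unitary_mat n P"
    using unitary_mat_four_block_diag[OF _ V, of 1] n by (simp add: P_def unitary_mat_def)
  have "adj W * A * W = P * mat_diag n (\<lambda>i. (e # es) ! i) * adj P"
    unfolding AW BV n mat_diag_Cons P_def
    by (rule four_block_diag_conj) (use V in \<open>auto simp: unitary_mat_carrier\<close>)
  then have "A = W * (P * mat_diag n (\<lambda>i. (e # es) ! i) * adj P) * adj W"
    using unitary_mat_conj_cancel[OF unitary_mat_adj[OF W] A] by simp
  then have "A = (W * P) * mat_diag n (\<lambda>i. (e # es) ! i) * adj (W * P)"
    using unitary_mat_dim[OF W] unitary_mat_dim[OF P] by (simp add: mult_conj_mat)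
  then show ?case
    using unitary_mat_mult[OF W P] by blast
qed

lemma hermitian_sorted_eigenvalues_diagonalization:
  assumes "A \<in> carrier_mat n n" "adj A = A" "sorted_eigenvalues n A lam"
  shows "\<exists>V. unitary_mat n V \<and> A = V * mat_diag n (\<lambda>i. complex_of_real (lam i)) * adj V"
proof -
  define es where "es = map (\<lambda>i. complex_of_real (lam i)) [0..<n]"
  have "char_poly A = (\<Prod>i < n. [:- complex_of_real (lam i), 1:])"
    using assms(3) by (simp add: sorted_eigenvalues_def)
  also have "\<dots> = (\<Prod>e \<leftarrow> es. [:- e, 1:])"
    unfolding es_def lessThan_atLeast0 map_map
    using prod.distinct_set_conv_list[of "[0..<n]" "\<lambda>i. [:- complex_of_real (lam i), 1:]"]
    by (simp add: o_def)
  finally obtain V where "unitary_mat n V" "A = V * mat_diag n (\<lambda>i. es ! i) * adj V"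
    using hermitian_unitary_diagonalization[OF assms(1,2)] by blast
  moreover have "mat_diag n (\<lambda>i. es ! i) = mat_diag n (\<lambda>i. complex_of_real (lam i))"
    by (rule eq_matI) (auto simp: mat_diag_def es_def)
  ultimately show ?thesis
    by auto
qed

lemma sorted_eigenvalue_quadratic_form:
  assumes A: "A \<in> carrier_mat n n" and "sorted_eigenvalues n A lam" "i < n"
  shows "\<exists>v \<in> carrier_vec n. v \<bullet>c v = 1 \<and> conjugate v \<bullet> (A *\<^sub>v v) = complex_of_real (lam i)"
proof -
  have "poly (char_poly A) (complex_of_real (lam i)) = 0"
    using assms(2,3) by (auto simp: sorted_eigenvalues_def poly_prod)
  then obtain v where v: "v \<in> carrier_vec n" "v \<bullet>c v = 1"
    and Av: "A *\<^sub>v v = complex_of_real (lam i) \<cdot>\<^sub>v v"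
    using unit_eigenvector_exists[OF A] eigenvalue_root_char_poly[OF A] by blast
  have "conjugate v \<bullet> (A *\<^sub>v v) = complex_of_real (lam i) * (v \<bullet>c v)"
    using v conjugate_vec_sprod_comm[OF v(1) v(1)] by (simp add: Av scalar_prod_smult_distrib[of _ n])
  then show ?thesis
    using v by auto
qed

lemma mat_diag_conj_index:
  assumes V: "V \<in> carrier_mat n m" and "k < n" "l < n"
  shows "(V * mat_diag m f * adj V) $$ (k, l) = (\<Sum>p < m. V $$ (k, p) * f p * cnj (V $$ (l, p)))"
  using assms by (simp add: mat_diag_mult_right[OF V] scalar_prod_def lessThan_atLeast0)

lemma sum_diag_unitary_conj:
  assumes V: "unitary_mat n V"
  shows "(\<Sum>k < n. (V * mat_diag n f * adj V) $$ (k, k)) = (\<Sum>p < n. f p)"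
proof -
  have "(\<Sum>k < n. (V * mat_diag n f * adj V) $$ (k, k))
      = (\<Sum>k < n. \<Sum>p < n. f p * (cnj (V $$ (k, p)) * V $$ (k, p)))"
    using mat_diag_conj_index[OF unitary_mat_carrier[OF V]] by (simp add: mult_ac)
  also have "\<dots> = (\<Sum>p < n. f p * (\<Sum>k < n. cnj (V $$ (k, p)) * V $$ (k, p)))"
    by (subst sum.swap) (simp add: sum_distrib_left)
  also have "\<dots> = (\<Sum>p < n. f p)"
    by (simp add: unitary_mat_col_orthonormal[OF V])
  finally show ?thesis .
qed

lemma adj_mult_mult_index_diag:
  assumes M: "M \<in> carrier_mat n n" and V: "V \<in> carrier_mat n m" and p: "p < m"
  shows "(adj V * M * V) $$ (p, p) = conjugate (col V p) \<bullet> (M *\<^sub>v col V p)"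
proof -
  have "adj V * M * V = adj V * (M * V)"
    using M V by (intro mult_mat_assoc) auto
  then have "(adj V * M * V) $$ (p, p) = (adj V * (M * V)) $$ (p, p)"
    by simp
  also have "\<dots> = col (M * V) p \<bullet>c col V p"
    by (rule adj_mult_mat_index) (use M V p in auto)
  also have "\<dots> = (M *\<^sub>v col V p) \<bullet>c col V p"
    using col_mult2[OF M V p] by simp
  also have "\<dots> = conjugate (col V p) \<bullet> (M *\<^sub>v col V p)"
    by (rule conjugate_vec_sprod_comm[of _ n]) (use M V in auto)
  finally show ?thesis .
qed

lemma unitary_conj_col_quadratic_form:
  assumes V: "unitary_mat n V" and p: "p < n"
  shows "conjugate (col V p) \<bullet> ((V * mat_diag n f * adj V) *\<^sub>v col V p) = f p"
proof -
  have Vc: "V \<in> carrier_mat n n"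
    using V by (rule unitary_mat_carrier)
  have "V * mat_diag n f * adj V \<in> carrier_mat n n"
    using Vc by (intro mult_carrier_mat[of _ n n] adj_carrier_mat) auto
  then have "conjugate (col V p) \<bullet> ((V * mat_diag n f * adj V) *\<^sub>v col V p)
      = (adj V * (V * mat_diag n f * adj V) * V) $$ (p, p)"
    using Vc p by (intro adj_mult_mult_index_diag[symmetric])
  also have "\<dots> = f p"
    using unitary_mat_conj_cancel[OF V mat_diag_dim] p by (simp add: mat_diag_def)
  finally show ?thesis .
qed

lemma density_mat_eigenvalue_nonneg:
  assumes A: "density_mat n A" and V: "unitary_mat n V"
    and AV: "A = V * mat_diag n (\<lambda>i. complex_of_real (lam i)) * adj V" and p: "p < n"
  shows "0 \<le> lam p"
proof -
  have "col V p \<in> carrier_vec n"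
    using col_dim[of V p] unitary_mat_dim(1)[OF V] by simp
  then have "0 \<le> Re (conjugate (col V p) \<bullet> (A *\<^sub>v col V p))"
    using A by (simp add: density_mat_def)
  moreover have "conjugate (col V p) \<bullet> (A *\<^sub>v col V p) = complex_of_real (lam p)"
    unfolding AV by (rule unitary_conj_col_quadratic_form[OF V p])
  ultimately show ?thesis
    by simp
qed

lemma density_mat_eigenvalue_sum:
  assumes A: "density_mat n A" and V: "unitary_mat n V"
    and AV: "A = V * mat_diag n (\<lambda>i. complex_of_real (lam i)) * adj V"
  shows "(\<Sum>p < n. lam p) = 1"
proof -
  have "(\<Sum>p < n. complex_of_real (lam p)) = (\<Sum>k < n. A $$ (k, k))"
    unfolding AV by (rule sum_diag_unitary_conj[OF V, symmetric])
  also have "\<dots> = 1"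
    using A by (simp add: density_mat_def)
  finally show ?thesis
    by (simp only: of_real_sum[symmetric] of_real_eq_1_iff)
qed

lemma sorted_eigenvalues_le: "sorted_eigenvalues n A lam \<Longrightarrow> i \<le> j \<Longrightarrow> j < n \<Longrightarrow> lam j \<le> lam i"
  by (simp add: sorted_eigenvalues_def)

lemma density_mat_sorted_eigenvalues:
  assumes "density_mat n A" "sorted_eigenvalues n A lam"
  shows "\<forall>j < n. 0 \<le> lam j" "(\<Sum>j < n. lam j) = 1"
proof -
  obtain V where "unitary_mat n V" "A = V * mat_diag n (\<lambda>i. complex_of_real (lam i)) * adj V"
    using hermitian_sorted_eigenvalues_diagonalization[OF _ _ assms(2)] assms(1)
    by (auto simp: density_mat_def)
  then show "\<forall>j < n. 0 \<le> lam j" "(\<Sum>j < n. lam j) = 1"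
    using density_mat_eigenvalue_nonneg density_mat_eigenvalue_sum assms(1) by auto
qed

section \<open>Kronecker products\<close>

lemma kron_carrier_mat [simp]: "kron m n A B \<in> carrier_mat (m * n) (m * n)"
  and dim_kron [simp]: "dim_row (kron m n A B) = m * n" "dim_col (kron m n A B) = m * n"
  by (auto simp: kron_def)

lemma kron_index [simp]:
  "r < m * n \<Longrightarrow> c < m * n \<Longrightarrow>
    kron m n A B $$ (r, c) = A $$ (r div n, c div n) * B $$ (r mod n, c mod n)"
  by (simp add: kron_def)

lemma kron_mult:
  assumes "A \<in> carrier_mat m m" "B \<in> carrier_mat n n" "C \<in> carrier_mat m m" "D \<in> carrier_mat n n"
  shows "kron m n A B * kron m n C D = kron m n (A * C) (B * D)"
proof (rule eq_matI)
  fix r c assume "r < dim_row (kron m n (A * C) (B * D))" "c < dim_col (kron m n (A * C) (B * D))"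
  then have r: "r < m * n" and c: "c < m * n"
    by auto
  have "(kron m n A B * kron m n C D) $$ (r, c)
      = (\<Sum>l < m * n. kron m n A B $$ (r, l) * kron m n C D $$ (l, c))"
    using r c by (simp add: scalar_prod_def lessThan_atLeast0)
  also have "\<dots> = (\<Sum>a < m. \<Sum>b < n. (A $$ (r div n, a) * C $$ (a, c div n)) *
      (B $$ (r mod n, b) * D $$ (b, c mod n)))"
    unfolding sum_lessThan_mult using r c
    by (intro sum.cong refl) (auto simp: mult_add_less_mult)
  also have "\<dots> = (\<Sum>a < m. A $$ (r div n, a) * C $$ (a, c div n)) *
      (\<Sum>b < n. B $$ (r mod n, b) * D $$ (b, c mod n))"
    by (simp add: sum_product)
  also have "\<dots> = kron m n (A * C) (B * D) $$ (r, c)"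
    using r c assms
    by (simp add: div_less_of_less_mult mod_less_of_less_mult scalar_prod_def lessThan_atLeast0)
  finally show "(kron m n A B * kron m n C D) $$ (r, c) = kron m n (A * C) (B * D) $$ (r, c)" .
qed auto

lemma adj_kron:
  assumes "A \<in> carrier_mat m m" "B \<in> carrier_mat n n"
  shows "adj (kron m n A B) = kron m n (adj A) (adj B)"
  by (rule eq_matI) (use assms in \<open>auto simp: div_less_of_less_mult mod_less_of_less_mult\<close>)

lemma kron_mat_diag:
  "kron m n (mat_diag m f) (mat_diag n g) = mat_diag (m * n) (\<lambda>l. f (l div n) * g (l mod n))"
proof (rule eq_matI)
  fix r c assume "r < dim_row (mat_diag (m * n) (\<lambda>l. f (l div n) * g (l mod n)))"
    "c < dim_col (mat_diag (m * n) (\<lambda>l. f (l div n) * g (l mod n)))"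
  moreover have "(r div n = c div n \<and> r mod n = c mod n) \<longleftrightarrow> r = c"
    by (metis div_mult_mod_eq)
  ultimately show "kron m n (mat_diag m f) (mat_diag n g) $$ (r, c)
      = mat_diag (m * n) (\<lambda>l. f (l div n) * g (l mod n)) $$ (r, c)"
    by (auto simp: mat_diag_def div_less_of_less_mult mod_less_of_less_mult)
qed auto

lemma kron_one_mat: "kron m n (1\<^sub>m m) (1\<^sub>m n) = 1\<^sub>m (m * n)"
  using kron_mat_diag[of m n "\<lambda>_. 1 :: complex" "\<lambda>_. 1"] by simp

lemma unitary_mat_kron:
  assumes "unitary_mat m U" "unitary_mat n V"
  shows "unitary_mat (m * n) (kron m n U V)"
  using assms
  by (simp add: unitary_mat_def adj_kron kron_mult kron_one_mat)

lemma kron_unitary_diagonalization: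
  assumes V: "V \<in> carrier_mat m m" and W: "W \<in> carrier_mat n n"
  shows "kron m n (V * mat_diag m f * adj V) (W * mat_diag n g * adj W)
    = kron m n V W * mat_diag (m * n) (\<lambda>l. f (l div n) * g (l mod n)) * adj (kron m n V W)"
proof -
  have "kron m n (V * mat_diag m f * adj V) (W * mat_diag n g * adj W)
      = kron m n V W * kron m n (mat_diag m f) (mat_diag n g) * kron m n (adj V) (adj W)"
    using V W by (simp add: kron_mult)
  then show ?thesis
    using V W by (simp add: kron_mat_diag adj_kron)
qed

lemma kron_unitary_conj_diagonalization:
  assumes "A \<in> carrier_mat m m" "adj A = A" "sorted_eigenvalues m A p"
    and "B \<in> carrier_mat n n" "adj B = B" "sorted_eigenvalues n B q"
    and U: "unitary_mat (m * n) U"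
  shows "\<exists>X. unitary_mat (m * n) X \<and>
    U * kron m n A B * adj U = X * mat_diag (m * n) (\<lambda>l. complex_of_real (p (l div n) * q (l mod n))) * adj X"
proof -
  obtain V where V: "unitary_mat m V" and A: "A = V * mat_diag m (\<lambda>i. complex_of_real (p i)) * adj V"
    using hermitian_sorted_eigenvalues_diagonalization assms(1-3) by blast
  obtain W where W: "unitary_mat n W" and B: "B = W * mat_diag n (\<lambda>i. complex_of_real (q i)) * adj W"
    using hermitian_sorted_eigenvalues_diagonalization assms(4-6) by blast
  have "U * kron m n A B * adj U
      = (U * kron m n V W) * mat_diag (m * n) (\<lambda>l. complex_of_real (p (l div n) * q (l mod n))) * adj (U * kron m n V W)"
    using unitary_mat_dim[OF U] unitary_mat_carrier[OF V] unitary_mat_carrier[OF W]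
    by (simp add: A B kron_unitary_diagonalization mult_conj_mat)
  moreover have "unitary_mat (m * n) (U * kron m n V W)"
    using U unitary_mat_kron[OF V W] by (rule unitary_mat_mult)
  ultimately show ?thesis
    by blast
qed

section \<open>The partial trace\<close>

(* For a unit vector v: the squared norm of the component of the l-th column of X along
   v \<otimes> \<complex>^n, in the basis ordering i * n + j of kron. *)
definition overlap :: "nat \<Rightarrow> nat \<Rightarrow> complex vec \<Rightarrow> complex mat \<Rightarrow> nat \<Rightarrow> real" where
  "overlap m n v X l = (\<Sum>j < n. (cmod (\<Sum>i < m. cnj (v $ i) * X $$ (i * n + j, l)))\<^sup>2)"

lemma ptrace2_quadratic_form:
  assumes X: "X \<in> carrier_mat (m * n) (m * n)" and v: "v \<in> carrier_vec m"
  shows "conjugate v \<bullet> (ptrace2 m n (X * mat_diag (m * n) (\<lambda>l. complex_of_real (e l)) * adj X) *\<^sub>v v)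
    = complex_of_real (\<Sum>l < m * n. e l * overlap m n v X l)"
proof -
  define \<sigma> where "\<sigma> = X * mat_diag (m * n) (\<lambda>l. complex_of_real (e l)) * adj X"
  define a where "a j l i = cnj (v $ i) * X $$ (i * n + j, l)" for j l i
  have \<sigma>: "\<sigma> $$ (i * n + j, k * n + j)
      = (\<Sum>l < m * n. X $$ (i * n + j, l) * complex_of_real (e l) * cnj (X $$ (k * n + j, l)))"
    if "i < m" "k < m" "j < n" for i k j
    unfolding \<sigma>_def using that by (intro mat_diag_conj_index[OF X] mult_add_less_mult)
  have "conjugate v \<bullet> (ptrace2 m n \<sigma> *\<^sub>v v)
      = (\<Sum>i < m. \<Sum>k < m. \<Sum>j < n. cnj (v $ i) * \<sigma> $$ (i * n + j, k * n + j) * v $ k)"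
    using v by (simp add: ptrace2_def scalar_prod_def lessThan_atLeast0 sum_distrib_left
        sum_distrib_right mult_ac)
  also have "\<dots> = (\<Sum>j < n. \<Sum>i < m. \<Sum>k < m. cnj (v $ i) * \<sigma> $$ (i * n + j, k * n + j) * v $ k)"
    by (rule sum_rotate3)
  also have "\<dots> = (\<Sum>j < n. \<Sum>l < m * n. complex_of_real (e l) * complex_of_real ((cmod (\<Sum>i < m. a j l i))\<^sup>2))"
  proof (rule sum.cong[OF refl])
    fix j assume "j \<in> {..<n}"
    then have "(\<Sum>i < m. \<Sum>k < m. cnj (v $ i) * \<sigma> $$ (i * n + j, k * n + j) * v $ k)
        = (\<Sum>i < m. \<Sum>k < m. \<Sum>l < m * n. complex_of_real (e l) * (a j l i * cnj (a j l k)))"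
      by (intro sum.cong refl) (simp add: \<sigma> a_def sum_distrib_left sum_distrib_right mult_ac)
    also have "\<dots> = (\<Sum>l < m * n. \<Sum>i < m. \<Sum>k < m. complex_of_real (e l) * (a j l i * cnj (a j l k)))"
      by (rule sum_rotate3)
    also have "\<dots> = (\<Sum>l < m * n. complex_of_real (e l) * complex_of_real ((cmod (\<Sum>i < m. a j l i))\<^sup>2))"
      by (simp only: cmod_sum_squared sum_distrib_left)
    finally show "(\<Sum>i < m. \<Sum>k < m. cnj (v $ i) * \<sigma> $$ (i * n + j, k * n + j) * v $ k)
        = (\<Sum>l < m * n. complex_of_real (e l) * complex_of_real ((cmod (\<Sum>i < m. a j l i))\<^sup>2))" .
  qed
  also have "\<dots> = complex_of_real (\<Sum>l < m * n. e l * overlap m n v X l)"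
    by (subst sum.swap) (simp add: overlap_def a_def sum_distrib_left)
  finally show ?thesis
    unfolding \<sigma>_def .
qed

lemma ptrace2_sorted_eigenvalue_overlap:
  assumes X: "unitary_mat (m * n) X"
    and ev: "sorted_eigenvalues m (ptrace2 m n (X * mat_diag (m * n) (\<lambda>l. complex_of_real (e l)) * adj X)) lam"
    and i: "i < m"
  shows "\<exists>v \<in> carrier_vec m. v \<bullet>c v = 1 \<and> lam i = (\<Sum>l < m * n. e l * overlap m n v X l)"
proof -
  have "ptrace2 m n (X * mat_diag (m * n) (\<lambda>l. complex_of_real (e l)) * adj X) \<in> carrier_mat m m"
    by (simp add: ptrace2_def)
  then obtain v where v: "v \<in> carrier_vec m" "v \<bullet>c v = 1" and
    "complex_of_real (lam i)
      = conjugate v \<bullet> (ptrace2 m n (X * mat_diag (m * n) (\<lambda>l. complex_of_real (e l)) * adj X) *\<^sub>v v)"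
    using sorted_eigenvalue_quadratic_form[OF _ ev i] by metis
  then have "complex_of_real (lam i) = complex_of_real (\<Sum>l < m * n. e l * overlap m n v X l)"
    by (simp only: ptrace2_quadratic_form[OF unitary_mat_carrier[OF X] v(1)])
  then have "lam i = (\<Sum>l < m * n. e l * overlap m n v X l)"
    by (simp only: of_real_eq_iff)
  then show ?thesis
    using v by blast
qed

lemma sum_overlap:
  assumes X: "unitary_mat (m * n) X" and v: "v \<in> carrier_vec m" "v \<bullet>c v = 1"
  shows "(\<Sum>l < m * n. overlap m n v X l) = real n"
proof -
  have row: "(\<Sum>l < m * n. X $$ (i * n + j, l) * cnj (X $$ (k * n + j, l))) = (if i = k then 1 else 0)"
    if "i < m" "k < m" "j < n" for i k j
    using unitary_mat_row_orthonormal[OF X, of "i * n + j" "k * n + j"] that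
    by (simp add: mult_add_less_mult)
  have "complex_of_real (\<Sum>l < m * n. overlap m n v X l)
      = (\<Sum>l < m * n. \<Sum>j < n. \<Sum>i < m. \<Sum>k < m.
          cnj (v $ i) * X $$ (i * n + j, l) * cnj (cnj (v $ k) * X $$ (k * n + j, l)))"
    by (simp only: overlap_def of_real_sum cmod_sum_squared)
  also have "\<dots> = (\<Sum>j < n. \<Sum>i < m. \<Sum>k < m. \<Sum>l < m * n.
          cnj (v $ i) * v $ k * (X $$ (i * n + j, l) * cnj (X $$ (k * n + j, l))))"
    by (subst sum.swap) (simp add: sum_rotate3[of _ "{..<m * n}", symmetric] mult_ac)
  also have "\<dots> = (\<Sum>j < n. \<Sum>i < m. \<Sum>k < m. if i = k then cnj (v $ i) * v $ k else 0)"
    by (intro sum.cong refl) (simp add: sum_distrib_left[symmetric] row)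
  also have "\<dots> = (\<Sum>j < n. \<Sum>i < m. cnj (v $ i) * v $ i)"
    by (simp add: sum.delta)
  also have "\<dots> = of_nat n"
    using v by (simp add: scalar_prod_def lessThan_atLeast0 mult.commute)
  finally show ?thesis
    by (metis of_real_eq_iff of_real_of_nat_eq)
qed

lemma overlap_le_one:
  assumes X: "unitary_mat (2 * n) X" and v: "v \<in> carrier_vec 2" "v \<bullet>c v = 1" and l: "l < 2 * n"
  shows "overlap 2 n v X l \<le> 1"
proof -
  have "complex_of_real ((cmod (v $ 0))\<^sup>2 + (cmod (v $ 1))\<^sup>2) = v $ 0 * cnj (v $ 0) + v $ 1 * cnj (v $ 1)"
    by (simp only: of_real_add complex_norm_square)
  also have "\<dots> = v \<bullet>c v"
    using v(1) by (simp add: scalar_prod_def numeral_2_eq_2)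
  finally have "complex_of_real ((cmod (v $ 0))\<^sup>2 + (cmod (v $ 1))\<^sup>2) = v \<bullet>c v" .
  then have v1: "(cmod (cnj (v $ 0)))\<^sup>2 + (cmod (cnj (v $ 1)))\<^sup>2 = 1"
    using v(2) by (simp only: complex_mod_cnj of_real_eq_1_iff)
  have "complex_of_real (\<Sum>r < 2 * n. (cmod (X $$ (r, l)))\<^sup>2) = (\<Sum>r < 2 * n. cnj (X $$ (r, l)) * X $$ (r, l))"
    by (simp only: of_real_sum complex_norm_square mult.commute)
  also have "\<dots> = 1"
    using unitary_mat_col_orthonormal[OF X l l] by simp
  finally have col: "complex_of_real (\<Sum>r < 2 * n. (cmod (X $$ (r, l)))\<^sup>2) = 1" .
  have "overlap 2 n v X l
      = (\<Sum>j < n. (cmod (cnj (v $ 0) * X $$ (j, l) + cnj (v $ 1) * X $$ (n + j, l)))\<^sup>2)"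
    by (simp add: overlap_def numeral_2_eq_2)
  also have "\<dots> \<le> (\<Sum>j < n. (cmod (X $$ (j, l)))\<^sup>2 + (cmod (X $$ (n + j, l)))\<^sup>2)"
    using v1 by (intro sum_mono) (metis cmod_mult_add_mult_squared_le mult_1)
  also have "\<dots> = (\<Sum>r < 2 * n. (cmod (X $$ (r, l)))\<^sup>2)"
    by (subst sum_lessThan_mult) (simp add: numeral_2_eq_2 sum.distrib)
  also have "\<dots> = 1"
    using col by (simp only: of_real_eq_1_iff)
  finally show ?thesis .
qed

section \<open>A linear program over the unit square\<close>

lemma affine_le_on_unit_square:
  fixes a b c \<mu> x y :: real
  assumes "\<mu> \<le> c" "a \<le> c" "b \<le> c" "a + b - \<mu> \<le> c"
    and "0 \<le> x" "x \<le> 1" "0 \<le> y" "y \<le> 1"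
  shows "a * x + b * y - \<mu> * (x + y - 1) \<le> c"
proof -
  \<comment> \<open>an affine function is the bilinear interpolation of its values at the corners\<close>
  have "a * x + b * y - \<mu> * (x + y - 1)
      = (1 - x) * (1 - y) * \<mu> + x * (1 - y) * a + (1 - x) * y * b + x * y * (a + b - \<mu>)"
    by (simp add: algebra_simps)
  also have "\<dots> \<le> (1 - x) * (1 - y) * c + x * (1 - y) * c + (1 - x) * y * c + x * y * c"
    using assms by (intro add_mono mult_left_mono) auto
  also have "\<dots> = c"
    by (simp add: algebra_simps)
  finally show ?thesis .
qed

lemma sum_le_by_multiplier:
  fixes a b c x y :: "nat \<Rightarrow> real" and \<mu> :: real
  assumes corners: "\<And>j. j < d \<Longrightarrow> \<mu> \<le> c j \<and> a j \<le> c j \<and> b j \<le> c j \<and> a j + b j - \<mu> \<le> c j"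
    and box: "\<And>j. j < d \<Longrightarrow> 0 \<le> x j \<and> x j \<le> 1 \<and> 0 \<le> y j \<and> y j \<le> 1"
    and total: "(\<Sum>j < d. x j + y j) = real d"
  shows "(\<Sum>j < d. a j * x j + b j * y j) \<le> (\<Sum>j < d. c j)"
proof -
  have "(\<Sum>j < d. x j + y j - 1) = 0"
    using total by (simp add: sum_subtractf)
  then have "(\<Sum>j < d. a j * x j + b j * y j) = (\<Sum>j < d. a j * x j + b j * y j - \<mu> * (x j + y j - 1))"
    by (simp add: sum_subtractf sum_distrib_left[symmetric])
  also have "\<dots> \<le> (\<Sum>j < d. c j)"
    using corners box by (intro sum_mono affine_le_on_unit_square) auto
  finally show ?thesis .
qed

lemma mixture_sum_le:
  fixes \<alpha> c \<beta>\<^sub>0 :: real and \<beta> x y :: "nat \<Rightarrow> real"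
  assumes \<alpha>: "1 - \<alpha> \<le> \<alpha>" "\<alpha> \<le> c"
    and \<beta>: "\<And>j. j < d \<Longrightarrow> 0 \<le> \<beta> j \<and> \<beta>\<^sub>0 \<le> \<beta> j \<and> \<beta> j \<le> c * (\<beta> j + \<beta>\<^sub>0)"
    and box: "\<And>j. j < d \<Longrightarrow> 0 \<le> x j \<and> x j \<le> 1 \<and> 0 \<le> y j \<and> y j \<le> 1"
    and total: "(\<Sum>j < d. x j + y j) = real d"
  shows "(\<Sum>j < d. \<beta> j * (\<alpha> * x j + (1 - \<alpha>) * y j)) \<le> c * (\<Sum>j < d. \<beta> j)"
proof -
  have "(\<Sum>j < d. \<beta> j * (\<alpha> * x j + (1 - \<alpha>) * y j))
      = (\<Sum>j < d. (\<alpha> * \<beta> j) * x j + ((1 - \<alpha>) * \<beta> j) * y j)"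
    by (simp add: algebra_simps)
  also have "\<dots> \<le> (\<Sum>j < d. c * \<beta> j)"
  proof (rule sum_le_by_multiplier[where \<mu> = "c * \<beta>\<^sub>0", OF _ box total])
    fix j assume j: "j < d"
    have "c * \<beta>\<^sub>0 \<le> c * \<beta> j" "\<alpha> * \<beta> j \<le> c * \<beta> j" "(1 - \<alpha>) * \<beta> j \<le> c * \<beta> j"
      using \<beta>[OF j] \<alpha> by (auto intro: mult_left_mono mult_right_mono)
    moreover have "\<alpha> * \<beta> j + (1 - \<alpha>) * \<beta> j - c * \<beta>\<^sub>0 \<le> c * \<beta> j"
      using \<beta>[OF j] by (simp add: algebra_simps)
    ultimately show "c * \<beta>\<^sub>0 \<le> c * \<beta> j \<and> \<alpha> * \<beta> j \<le> c * \<beta> j \<and>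
        (1 - \<alpha>) * \<beta> j \<le> c * \<beta> j \<and> \<alpha> * \<beta> j + (1 - \<alpha>) * \<beta> j - c * \<beta>\<^sub>0 \<le> c * \<beta> j"
      by blast
  qed
  finally show ?thesis
    by (simp add: sum_distrib_left)
qed

lemma mixture_sum_le_max:
  fixes \<alpha> :: real and \<beta> x y :: "nat \<Rightarrow> real"
  assumes d: "0 < d" and \<alpha>: "1 - \<alpha> \<le> \<alpha>"
    and \<beta>: "\<And>j. j < d \<Longrightarrow> 0 \<le> \<beta> j \<and> \<beta> (d - 1) \<le> \<beta> j \<and> \<beta> j \<le> \<beta> 0" and \<beta>1: "(\<Sum>j < d. \<beta> j) = 1"
    and box: "\<And>j. j < d \<Longrightarrow> 0 \<le> x j \<and> x j \<le> 1 \<and> 0 \<le> y j \<and> y j \<le> 1"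
    and total: "(\<Sum>j < d. x j + y j) = real d"
  shows "(\<Sum>j < d. \<beta> j * (\<alpha> * x j + (1 - \<alpha>) * y j)) \<le> max \<alpha> (\<beta> 0 / (\<beta> 0 + \<beta> (d - 1)))"
proof -
  define c where "c = max \<alpha> (\<beta> 0 / (\<beta> 0 + \<beta> (d - 1)))"
  have "0 < \<beta> 0"
    using \<beta>1 sum_nonpos[of "{..<d}" \<beta>] \<beta> by force
  moreover have "0 \<le> \<beta> (d - 1)"
    using \<beta>[of "d - 1"] d by simp
  ultimately have pos: "0 < \<beta> 0 + \<beta> (d - 1)"
    by simp
  have key: "\<beta> j \<le> c * (\<beta> j + \<beta> (d - 1))" if j: "j < d" for j
  proof -
    have "\<beta> j * \<beta> (d - 1) \<le> \<beta> 0 * \<beta> (d - 1)"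
      using \<beta>[OF j] \<beta>[of "d - 1"] d by (intro mult_right_mono) auto
    then have "\<beta> j \<le> \<beta> 0 / (\<beta> 0 + \<beta> (d - 1)) * (\<beta> j + \<beta> (d - 1))"
      using pos by (simp add: field_simps)
    also have "\<dots> \<le> c * (\<beta> j + \<beta> (d - 1))"
      using \<beta>[OF j] \<beta>[of "d - 1"] d by (intro mult_right_mono) (auto simp: c_def)
    finally show ?thesis .
  qed
  have "(\<Sum>j < d. \<beta> j * (\<alpha> * x j + (1 - \<alpha>) * y j)) \<le> c * (\<Sum>j < d. \<beta> j)"
  proof (rule mixture_sum_le[OF \<alpha> _ _ box total])
    show "\<alpha> \<le> c"
      by (simp add: c_def)
    show "0 \<le> \<beta> j \<and> \<beta> (d - 1) \<le> \<beta> j \<and> \<beta> j \<le> c * (\<beta> j + \<beta> (d - 1))" if "j < d" for j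
      using \<beta>[OF that] key[OF that] by blast
  qed
  then show ?thesis
    using \<beta>1 by (simp add: c_def)
qed

theorem theorem2:
  fixes d :: nat and rhoT rhoA U :: "complex mat"
    and \<alpha> \<alpha>out :: real and \<beta> :: "nat \<Rightarrow> real"
  assumes "d \<ge> 2"
    and "density_mat 2 rhoT"
    and "sorted_eigenvalues 2 rhoT (\<lambda>i. if i = 0 then \<alpha> else 1 - \<alpha>)"
    and "density_mat d rhoA"
    and "sorted_eigenvalues d rhoA \<beta>"
    and "unitary_mat (2*d) U"
    and "sorted_eigenvalues 2 (ptrace2 2 d (U * kron 2 d rhoT rhoA * adj U))
           (\<lambda>i. if i = 0 then \<alpha>out else 1 - \<alpha>out)"
  shows "\<alpha>out \<le> max \<alpha> (\<beta> 0 / (\<beta> 0 + \<beta> (d - 1)))"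
proof -
  have hT: "rhoT \<in> carrier_mat 2 2" "adj rhoT = rhoT" and hA: "rhoA \<in> carrier_mat d d" "adj rhoA = rhoA"
    using assms(2,4) by (auto simp: density_mat_def)
  obtain X where X: "unitary_mat (2 * d) X" and out_state: "U * kron 2 d rhoT rhoA * adj U
      = X * mat_diag (2 * d) (\<lambda>l. complex_of_real ((if l div d = 0 then \<alpha> else 1 - \<alpha>) * \<beta> (l mod d))) * adj X"
    using kron_unitary_conj_diagonalization[OF hT assms(3) hA assms(5,6)] by auto
  obtain v where v: "v \<in> carrier_vec 2" "v \<bullet>c v = 1" and out: "\<alpha>out
      = (\<Sum>l < 2 * d. (if l div d = 0 then \<alpha> else 1 - \<alpha>) * \<beta> (l mod d) * overlap 2 d v X l)"
    using ptrace2_sorted_eigenvalue_overlap[OF X assms(7)[unfolded out_state], of 0] by auto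
  have "\<alpha>out = (\<Sum>j < d. \<beta> j * (\<alpha> * overlap 2 d v X j + (1 - \<alpha>) * overlap 2 d v X (d + j)))"
    unfolding out sum_lessThan_two_mult by (intro sum.cong refl) (simp add: algebra_simps)
  also have "\<dots> \<le> max \<alpha> (\<beta> 0 / (\<beta> 0 + \<beta> (d - 1)))"
  proof (rule mixture_sum_le_max)
    show "1 - \<alpha> \<le> \<alpha>"
      using sorted_eigenvalues_le[OF assms(3), of 0 1] by simp
    show "0 \<le> \<beta> j \<and> \<beta> (d - 1) \<le> \<beta> j \<and> \<beta> j \<le> \<beta> 0" if "j < d" for j
      using density_mat_sorted_eigenvalues(1)[OF assms(4,5)] sorted_eigenvalues_le[OF assms(5)] that by auto
    show "(\<Sum>j < d. \<beta> j) = 1"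
      using density_mat_sorted_eigenvalues(2)[OF assms(4,5)] .
    show "0 \<le> overlap 2 d v X j \<and> overlap 2 d v X j \<le> 1 \<and>
        0 \<le> overlap 2 d v X (d + j) \<and> overlap 2 d v X (d + j) \<le> 1" if "j < d" for j
      using overlap_le_one[OF X v] that by (auto simp: overlap_def intro: sum_nonneg)
    show "(\<Sum>j < d. overlap 2 d v X j + overlap 2 d v X (d + j)) = real d"
      using sum_overlap[OF X v] by (simp add: sum_lessThan_two_mult)
  qed (use assms(1) in simp)
  finally show ?thesis .
qed

end
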